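(* Let $\mathcal{E}_1=[\theta_1,u_1]$, $\mathcal{E}_2=[\theta_2,u_2]$ be interval effect algebras with order-determining sets of states. Let $\Omega$ be a finite set, $n\ge1$, and for $i=1,\dots,n$ let $A_i=\{A_{ix}:x\in\Omega\}$ be an observable on $\mathcal{E}_1$, $\beta_{ix}\in\mathcal{S}(\mathcal{E}_2)$ for $x\in\Omega$, and $\lambda_i\in[0,1]$ with $\sum_i\lambda_i=1$. Define, for $x\in\Omega$ and $\alpha\in\mathcal{S}(\mathcal{E}_1)$, $\mathcal{I}_x(\alpha)=\sum_i\lambda_i\alpha(A_{ix})\beta_{ix}$. Then: (i) $\mathcal{I}=\{\mathcal{I}_x:x\in\Omega\}$ is an instrument from $\mathcal{E}_1$ to $\mathcal{E}_2$; (ii) for $\alpha\in\mathcal{S}(\mathcal{E}_1)$, setting $\alpha_i=\sum_x\alpha(A_{ix})\beta_{ix}$, we have $\alpha_i\in\mathcal{S}(\mathcal{E}_2)$ and $\overline{\mathcal{I}}(\alpha)=\sum_x\mathcal{I}_x(\alpha)=\sum_i\lambda_i\alpha_i\in\mathcal{S}(\mathcal{E}_2)$; (iii) $\widehat{\mathcal{I}}=\sum_i\lambda_iA_i$, i.e. for each $x\in\Omega$, $\sum_i\lambda_iA_{ix}\in\mathcal{E}_1$ and $\alpha(\sum_i\lambda_iA_{ix})=\mathcal{I}_x(\alpha)(u_2)$ for all $\alpha\in\mathcal{S}(\mathcal{E}_1)$.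
   Context: Let $V$ be a real vector space with zero $\theta$ and $K\subseteq V$ a positive cone ($\mathbb{R}^+K\subseteq K$, $K+K\subseteq K$, $K\cap(-K)=\{\theta\}$), ordered by $x\le y$ iff $y-x\in K$. For $u\in K$, $u\neq\theta$, the interval effect algebra is $\mathcal{E}=[\theta,u]=\{x\in K:x\le u\}$; $a\perp b$ means $a+b\le u$. A state is $s\colon\mathcal{E}\to[0,1]$ with $s(u)=1$ and $s(a+b)=s(a)+s(b)$ when $a\perp b$; $\mathcal{S}(\mathcal{E})$ is the set of all states, assumed order-determining ($a\le b$ iff $s(a)\le s(b)$ for all states $s$). Affine = preserves finite convex combinations. A substate is $\lambda s$, $\lambda\in[0,1]$, $s$ a state. An operation from $\mathcal{E}_1$ to $\mathcal{E}_2$ is an affine map from $\mathcal{S}(\mathcal{E}_1)$ to substates on $\mathcal{E}_2$; a channel is an operation with values in $\mathcal{S}(\mathcal{E}_2)$. An observable on $\mathcal{E}$ is a finite family $\{A_x:x\in\Omega\}\subseteq\mathcal{E}$ with $\sum_xA_x=u$. An instrument from $\mathcal{E}_1$ to $\mathcal{E}_2$ is a finite family $\{\mathcal{I}_x\}$ of operations whose pointwise sum $\overline{\mathcal{I}}=\sum_x\mathcal{I}_x$ is a channel; $\widehat{\mathcal{I}}_x$ denotes the (unique, by order-determination) effect in $\mathcal{E}_1$ with $\alpha(\widehat{\mathcal{I}}_x)=\mathcal{I}_x(\alpha)(u_2)$ for all $\alpha\in\mathcal{S}(\mathcal{E}_1)$, and $\widehat{\mathcal{I}}=\{\widehat{\mathcal{I}}_x\}$.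 (The instrument $\mathcal{I}$ in the claim is called a mixed Holevo instrument.) *)

theory Defs
  imports "HOL-Analysis.Analysis"
begin

definition positive_cone :: "'v::real_vector set \<Rightarrow> bool" where
  "positive_cone K \<longleftrightarrow>
     (\<forall>r::real. \<forall>x\<in>K. r \<ge> 0 \<longrightarrow> r *\<^sub>R x \<in> K) \<and>
     (\<forall>x\<in>K. \<forall>y\<in>K. x + y \<in> K) \<and>
     K \<inter> uminus ` K = {0}"

definition cone_le :: "'v::real_vector set \<Rightarrow> 'v \<Rightarrow> 'v \<Rightarrow> bool" where
  "cone_le K x y \<longleftrightarrow> y - x \<in> K"

definition interval_EA :: "'v::real_vector set \<Rightarrow> 'v \<Rightarrow> 'v set" where
  "interval_EA K u = {x \<in> K. cone_le K x u}"

(* States on [0,u].  Convention: a state is a function on V which vanishes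
   outside the effect algebra (so that states are determined by their values on E). *)
definition is_state :: "'v::real_vector set \<Rightarrow> 'v \<Rightarrow> ('v \<Rightarrow> real) \<Rightarrow> bool" where
  "is_state K u s \<longleftrightarrow>
     (\<forall>a\<in>interval_EA K u. 0 \<le> s a \<and> s a \<le> 1) \<and>
     s u = 1 \<and>
     (\<forall>a\<in>interval_EA K u. \<forall>b\<in>interval_EA K u.
        a + b \<in> interval_EA K u \<longrightarrow> s (a + b) = s a + s b) \<and>
     (\<forall>a. a \<notin> interval_EA K u \<longrightarrow> s a = 0)"

definition states :: "'v::real_vector set \<Rightarrow> 'v \<Rightarrow> ('v \<Rightarrow> real) set" where
  "states K u = {s. is_state K u s}"

definition order_determining :: "'v::real_vector set \<Rightarrow> 'v \<Rightarrow> bool" where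
  "order_determining K u \<longleftrightarrow>
     (\<forall>a\<in>interval_EA K u. \<forall>b\<in>interval_EA K u.
        cone_le K a b \<longleftrightarrow> (\<forall>s\<in>states K u. s a \<le> s b))"

definition interval_EA_setting :: "'v::real_vector set \<Rightarrow> 'v \<Rightarrow> bool" where
  "interval_EA_setting K u \<longleftrightarrow> positive_cone K \<and> u \<in> K \<and> u \<noteq> 0"

definition substates :: "'v::real_vector set \<Rightarrow> 'v \<Rightarrow> ('v \<Rightarrow> real) set" where
  "substates K u = {f. \<exists>l::real. 0 \<le> l \<and> l \<le> 1 \<and>
                        (\<exists>s\<in>states K u. f = (\<lambda>v. l * s v))}"

definition affine_on_fun :: "('a \<Rightarrow> real) set \<Rightarrow> (('a \<Rightarrow> real) \<Rightarrow> ('b \<Rightarrow> real)) \<Rightarrow> bool" where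
  "affine_on_fun S F \<longleftrightarrow>
     (\<forall>(I::nat set) (w::nat \<Rightarrow> real) (a::nat \<Rightarrow> 'a \<Rightarrow> real).
        finite I \<and> I \<noteq> {} \<and> (\<forall>i\<in>I. 0 \<le> w i \<and> a i \<in> S) \<and> sum w I = 1 \<longrightarrow>
        F (\<lambda>v. \<Sum>i\<in>I. w i * a i v) = (\<lambda>v. \<Sum>i\<in>I. w i * F (a i) v))"

definition operation ::
  "'v::real_vector set \<Rightarrow> 'v \<Rightarrow> 'w::real_vector set \<Rightarrow> 'w \<Rightarrow>
   (('v \<Rightarrow> real) \<Rightarrow> ('w \<Rightarrow> real)) \<Rightarrow> bool" where
  "operation K1 u1 K2 u2 F \<longleftrightarrow>
     affine_on_fun (states K1 u1) F \<and> (\<forall>a\<in>states K1 u1. F a \<in> substates K2 u2)"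

definition channel ::
  "'v::real_vector set \<Rightarrow> 'v \<Rightarrow> 'w::real_vector set \<Rightarrow> 'w \<Rightarrow>
   (('v \<Rightarrow> real) \<Rightarrow> ('w \<Rightarrow> real)) \<Rightarrow> bool" where
  "channel K1 u1 K2 u2 F \<longleftrightarrow>
     operation K1 u1 K2 u2 F \<and> (\<forall>a\<in>states K1 u1. F a \<in> states K2 u2)"

definition observable :: "'v::real_vector set \<Rightarrow> 'v \<Rightarrow> 'x set \<Rightarrow> ('x \<Rightarrow> 'v) \<Rightarrow> bool" where
  "observable K u \<Omega> A \<longleftrightarrow>
     finite \<Omega> \<and> (\<forall>x\<in>\<Omega>. A x \<in> interval_EA K u) \<and> (\<Sum>x\<in>\<Omega>. A x) = u"

definition instr_sum :: "'x set \<Rightarrow> ('x \<Rightarrow> ('v \<Rightarrow> real) \<Rightarrow> ('w \<Rightarrow> real)) \<Rightarrow>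
                         ('v \<Rightarrow> real) \<Rightarrow> ('w \<Rightarrow> real)" where
  "instr_sum \<Omega> I = (\<lambda>a. \<lambda>v. \<Sum>x\<in>\<Omega>. I x a v)"

definition instrument ::
  "'v::real_vector set \<Rightarrow> 'v \<Rightarrow> 'w::real_vector set \<Rightarrow> 'w \<Rightarrow>
   'x set \<Rightarrow> ('x \<Rightarrow> ('v \<Rightarrow> real) \<Rightarrow> ('w \<Rightarrow> real)) \<Rightarrow> bool" where
  "instrument K1 u1 K2 u2 \<Omega> I \<longleftrightarrow>
     finite \<Omega> \<and> (\<forall>x\<in>\<Omega>. operation K1 u1 K2 u2 (I x)) \<and>
     channel K1 u1 K2 u2 (instr_sum \<Omega> I)"

end

theory Submission
  imports Defs
begin

text \<open>Each \<open>\<I>\<^sub>x\<close> is, as a function of \<open>\<alpha>\<close>, a nonnegative combination of the values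
  \<open>\<alpha>(A\<^sub>i\<^sub>x)\<close> with the fixed states \<open>\<beta>\<^sub>i\<^sub>x\<close>, hence affine, and its total weight
  \<open>\<Sum>\<^sub>i \<lambda>\<^sub>i \<alpha>(A\<^sub>i\<^sub>x) \<le> 1\<close> makes it a substate. Summing over \<open>x\<close> and using
  \<open>\<Sum>\<^sub>x \<alpha>(A\<^sub>i\<^sub>x) = \<alpha>(u\<^sub>1) = 1\<close> turns \<open>\<Sum>\<^sub>x \<I>\<^sub>x(\<alpha>)\<close> into the convex combination
  \<open>\<Sum>\<^sub>i \<lambda>\<^sub>i \<alpha>\<^sub>i\<close> of states. Part (iii) rests on homogeneity of states,
  \<open>\<alpha>(r A) = r \<alpha>(A)\<close> for \<open>0 \<le> r \<le> 1\<close>: the map \<open>r \<mapsto> \<alpha>(r A)\<close> is additive and nonnegative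
  on \<open>[0, 1]\<close>, hence linear by the classical Cauchy argument.\<close>

context
  fixes f :: "real \<Rightarrow> real"
  assumes additive: "\<And>a b. 0 \<le> a \<Longrightarrow> 0 \<le> b \<Longrightarrow> a + b \<le> 1 \<Longrightarrow> f (a + b) = f a + f b"
    and nonneg: "\<And>a. 0 \<le> a \<Longrightarrow> a \<le> 1 \<Longrightarrow> 0 \<le> f a"
begin

lemma unit_additive_mono:
  assumes "0 \<le> a" "a \<le> b" "b \<le> 1"
  shows "f a \<le> f b"
proof -
  have "f b = f a + f (b - a)"
    using additive[of a "b - a"] assms by simp
  moreover have "0 \<le> f (b - a)"
    using nonneg assms by simp
  ultimately show ?thesis by simp
qed

lemma unit_additive_of_nat_mult:
  assumes "0 \<le> x" "real k * x \<le> 1"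
  shows "f (real k * x) = real k * f x"
  using assms(2)
proof (induction k)
  case 0
  then show ?case
    using additive[of 0 0] by simp
next
  case (Suc k)
  have "real k * x \<le> 1"
    using Suc.prems assms(1) by (simp add: algebra_simps)
  then have "f (real k * x + x) = f (real k * x) + f x"
    using additive[of "real k * x" x] Suc.prems assms(1) by (simp add: algebra_simps)
  then show ?case
    using Suc.IH \<open>real k * x \<le> 1\<close> by (simp add: algebra_simps)
qed

lemma unit_additive_fraction:
  assumes "m \<ge> 1" "k \<le> m"
  shows "f (real k / real m) = real k / real m * f 1"
proof -
  have "f 1 = real m * f (1 / real m)"
    using unit_additive_of_nat_mult[of "1 / real m" m] assms(1) by simp
  moreover have "f (real k / real m) = real k * f (1 / real m)"
    using unit_additive_of_nat_mult[of "1 / real m" k] assms by (simp add: field_simps)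
  ultimately show ?thesis
    using assms(1) by (simp add: field_simps)
qed

lemma unit_additive_approx:
  assumes m: "m \<ge> 1" and r: "0 \<le> r" "r \<le> 1"
  shows "\<bar>f r - r * f 1\<bar> \<le> f 1 / real m"
proof -
  define k where "k = nat \<lfloor>r * real m\<rfloor>"
  define t where "t = r - real k / real m"
  have "real k = of_int \<lfloor>r * real m\<rfloor>"
    using r unfolding k_def by simp
  then have k_le: "real k \<le> r * real m" and k_gt: "r * real m < real k + 1"
    by linarith+
  have m_pos: "real m > 0"
    using m by simp
  have "r * real m \<le> real m"
    using r m_pos by (simp add: mult_left_le_one_le)
  with k_le have "k \<le> m"
    by linarith
  have "t = (r * real m - real k) / real m"
    using m_pos unfolding t_def by (simp add: field_simps)
  then have t: "0 \<le> t" "t \<le> 1 / real m"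
    using k_le k_gt m_pos by (simp_all add: divide_right_mono)
  have "1 / real m \<le> 1"
    using m by simp
  have "f r = f (real k / real m) + f t"
    using additive[of "real k / real m" t] t r m_pos unfolding t_def by simp
  also have "\<dots> = real k / real m * f 1 + f t"
    using unit_additive_fraction[OF m \<open>k \<le> m\<close>] by simp
  finally have "f r - r * f 1 = f t - t * f 1"
    unfolding t_def by (simp add: algebra_simps)
  moreover have "0 \<le> f t"
    using nonneg t \<open>1 / real m \<le> 1\<close> by simp
  moreover have "f t \<le> f 1 / real m"
    using unit_additive_mono[of t "1 / real m"] unit_additive_fraction[of m 1]
      t \<open>1 / real m \<le> 1\<close> m by simp
  moreover have "0 \<le> t * f 1" "t * f 1 \<le> f 1 / real m"
    using t nonneg[of 1] mult_right_mono[OF t(2), of "f 1"] by simp_all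
  ultimately show ?thesis
    by linarith
qed

lemma unit_additive_linear:
  assumes "0 \<le> r" "r \<le> 1"
  shows "f r = r * f 1"
proof (rule ccontr)
  define d where "d = \<bar>f r - r * f 1\<bar>"
  assume "f r \<noteq> r * f 1"
  then have "d > 0"
    unfolding d_def by simp
  then obtain m :: nat where "f 1 < real m * d"
    using ex_less_of_nat_mult by blast
  moreover have "m \<ge> 1"
    using calculation nonneg[of 1] \<open>d > 0\<close> by (cases m) auto
  ultimately have "f 1 / real m < d"
    by (simp add: divide_less_eq mult.commute)
  with unit_additive_approx[OF \<open>m \<ge> 1\<close> assms] show False
    unfolding d_def by simp
qed

end

lemma positive_cone_zero: "positive_cone K \<Longrightarrow> 0 \<in> K"
  unfolding positive_cone_def by blast

lemma positive_cone_add: "positive_cone K \<Longrightarrow> x \<in> K \<Longrightarrow> y \<in> K \<Longrightarrow> x + y \<in> K"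
  unfolding positive_cone_def by blast

lemma positive_cone_scaleR: "positive_cone K \<Longrightarrow> 0 \<le> r \<Longrightarrow> x \<in> K \<Longrightarrow> r *\<^sub>R x \<in> K"
  unfolding positive_cone_def by blast

lemma positive_cone_sum:
  assumes "positive_cone K" "\<And>x. x \<in> S \<Longrightarrow> f x \<in> K"
  shows "sum f S \<in> K"
  using assms(2)
  by (induction S rule: infinite_finite_induct)
    (simp_all add: positive_cone_zero positive_cone_add assms(1))

lemma interval_EA_iff: "x \<in> interval_EA K u \<longleftrightarrow> x \<in> K \<and> u - x \<in> K"
  unfolding interval_EA_def cone_le_def by simp

lemma interval_EA_convex_combination:
  assumes K: "positive_cone K" and w: "\<And>j. j \<in> J \<Longrightarrow> 0 \<le> w j" and w_sum: "sum w J = 1"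
    and e: "\<And>j. j \<in> J \<Longrightarrow> e j \<in> interval_EA K u"
  shows "(\<Sum>j\<in>J. w j *\<^sub>R e j) \<in> interval_EA K u"
proof -
  have "u - (\<Sum>j\<in>J. w j *\<^sub>R e j) = (\<Sum>j\<in>J. w j *\<^sub>R (u - e j))"
    using w_sum by (simp add: scaleR_diff_right sum_subtractf scaleR_sum_left[symmetric])
  moreover have "(\<Sum>j\<in>J. w j *\<^sub>R (u - e j)) \<in> K" "(\<Sum>j\<in>J. w j *\<^sub>R e j) \<in> K"
    using e w by (auto intro!: positive_cone_sum[OF K] positive_cone_scaleR[OF K]
        simp: interval_EA_iff)
  ultimately show ?thesis
    by (simp add: interval_EA_iff)
qed

lemma interval_EA_scaleR:
  assumes K: "positive_cone K" and x: "x \<in> interval_EA K u" and r: "0 \<le> r" "r \<le> 1"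
  shows "r *\<^sub>R x \<in> interval_EA K u"
proof -
  have "u - r *\<^sub>R x = (u - x) + (1 - r) *\<^sub>R x"
    by (simp add: algebra_simps)
  also have "\<dots> \<in> K"
    using x r by (simp add: interval_EA_iff positive_cone_add[OF K] positive_cone_scaleR[OF K])
  finally show ?thesis
    using x r by (simp add: interval_EA_iff positive_cone_scaleR[OF K])
qed

lemma state_nonneg: "is_state K u s \<Longrightarrow> 0 \<le> s a"
  unfolding is_state_def by (cases "a \<in> interval_EA K u") auto

lemma state_le_1: "is_state K u s \<Longrightarrow> s a \<le> 1"
  unfolding is_state_def by (cases "a \<in> interval_EA K u") auto

lemma state_add:
  "is_state K u s \<Longrightarrow> a \<in> interval_EA K u \<Longrightarrow> b \<in> interval_EA K u \<Longrightarrow>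
    a + b \<in> interval_EA K u \<Longrightarrow> s (a + b) = s a + s b"
  unfolding is_state_def by blast

lemma state_zero:
  assumes "positive_cone K" "u \<in> K" "is_state K u s"
  shows "s 0 = 0"
proof -
  have "0 \<in> interval_EA K u"
    using assms by (simp add: interval_EA_iff positive_cone_zero)
  then show ?thesis
    using state_add[OF assms(3), of 0 0] by simp
qed

lemma state_sum:
  assumes K: "positive_cone K" and s: "is_state K u s" and fin: "finite S"
    and e: "\<And>x. x \<in> S \<Longrightarrow> e x \<in> K" and bounded: "u - sum e S \<in> K"
  shows "s (sum e S) = (\<Sum>x\<in>S. s (e x))"
  using fin e bounded
proof (induction S rule: finite_induct)
  case empty
  then show ?case
    using state_zero[OF K _ s] by simp
next
  case (insert y F)
  have ey: "e y \<in> K" and eF: "sum e F \<in> K"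
    using insert.prems(1) by (auto intro: positive_cone_sum[OF K])
  have sum_insert: "sum e (insert y F) = e y + sum e F"
    using insert.hyps by simp
  have uF: "u - sum e F \<in> K"
    using positive_cone_add[OF K insert.prems(2) ey] by (simp add: sum_insert algebra_simps)
  moreover have "u - e y \<in> K"
    using positive_cone_add[OF K insert.prems(2) eF] by (simp add: sum_insert algebra_simps)
  moreover have "e y + sum e F \<in> interval_EA K u"
    using insert.prems(2) ey eF positive_cone_add[OF K] sum_insert by (simp add: interval_EA_iff)
  ultimately have "s (e y + sum e F) = s (e y) + s (sum e F)"
    using state_add[OF s] ey eF by (simp add: interval_EA_iff)
  moreover have "s (sum e F) = (\<Sum>x\<in>F. s (e x))"
    using insert.IH insert.prems(1) uF by simp
  ultimately show ?case
    using insert.hyps by simp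
qed

lemma state_scaleR:
  assumes K: "positive_cone K" and s: "is_state K u s" and x: "x \<in> interval_EA K u"
    and r: "0 \<le> r" "r \<le> 1"
  shows "s (r *\<^sub>R x) = r * s x"
proof -
  have "s ((a + b) *\<^sub>R x) = s (a *\<^sub>R x) + s (b *\<^sub>R x)"
    if "0 \<le> a" "0 \<le> b" "a + b \<le> 1" for a b
  proof -
    have "a *\<^sub>R x \<in> interval_EA K u" "b *\<^sub>R x \<in> interval_EA K u" "(a + b) *\<^sub>R x \<in> interval_EA K u"
      using that by (simp_all add: interval_EA_scaleR[OF K x])
    then show ?thesis
      using state_add[OF s] by (simp add: scaleR_add_left)
  qed
  from unit_additive_linear[of "\<lambda>a. s (a *\<^sub>R x)", OF this _ r]
  show ?thesis
    using state_nonneg[OF s] by simp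
qed

lemma state_convex_combination:
  assumes K: "positive_cone K" and s: "is_state K u s" and fin: "finite J"
    and w: "\<And>j. j \<in> J \<Longrightarrow> 0 \<le> w j" and w_sum: "sum w J = 1"
    and e: "\<And>j. j \<in> J \<Longrightarrow> e j \<in> interval_EA K u"
  shows "s (\<Sum>j\<in>J. w j *\<^sub>R e j) = (\<Sum>j\<in>J. w j * s (e j))"
proof -
  have "s (\<Sum>j\<in>J. w j *\<^sub>R e j) = (\<Sum>j\<in>J. s (w j *\<^sub>R e j))"
    using interval_EA_convex_combination[OF K w w_sum e] e w
    by (intro state_sum[OF K s fin]) (auto intro: positive_cone_scaleR[OF K] simp: interval_EA_iff)
  also have "\<dots> = (\<Sum>j\<in>J. w j * s (e j))"
    using w w_sum e fin member_le_sum[of _ J w]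
    by (intro sum.cong refl state_scaleR[OF K s]) auto
  finally show ?thesis .
qed

lemma state_observable_sum:
  assumes K: "positive_cone K" and s: "is_state K u s" and A: "observable K u \<Omega> A"
  shows "(\<Sum>x\<in>\<Omega>. s (A x)) = 1"
proof -
  have "s (\<Sum>x\<in>\<Omega>. A x) = (\<Sum>x\<in>\<Omega>. s (A x))"
    using A positive_cone_zero[OF K]
    by (intro state_sum[OF K s]) (auto simp: observable_def interval_EA_iff)
  then show ?thesis
    using A s by (simp add: observable_def is_state_def)
qed

lemma is_state_convex_combination:
  assumes fin: "finite J" and w: "\<And>j. j \<in> J \<Longrightarrow> 0 \<le> w j" and w_sum: "sum w J = 1"
    and s: "\<And>j. j \<in> J \<Longrightarrow> is_state K u (s j)"
  shows "is_state K u (\<lambda>v. \<Sum>j\<in>J. w j * s j v)"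
  unfolding is_state_def
proof (intro conjI ballI allI impI)
  fix a
  show "0 \<le> (\<Sum>j\<in>J. w j * s j a)"
    using w s state_nonneg by (intro sum_nonneg mult_nonneg_nonneg) blast+
  have "(\<Sum>j\<in>J. w j * s j a) \<le> (\<Sum>j\<in>J. w j)"
    using w s by (intro sum_mono mult_left_le state_le_1) auto
  then show "(\<Sum>j\<in>J. w j * s j a) \<le> 1"
    using w_sum by simp
next
  show "(\<Sum>j\<in>J. w j * s j u) = 1"
    using s w_sum by (simp add: is_state_def)
next
  fix a b
  assume "a \<in> interval_EA K u" "b \<in> interval_EA K u" "a + b \<in> interval_EA K u"
  then have "\<And>j. j \<in> J \<Longrightarrow> s j (a + b) = s j a + s j b"
    using s state_add by blast
  then show "(\<Sum>j\<in>J. w j * s j (a + b)) = (\<Sum>j\<in>J. w j * s j a) + (\<Sum>j\<in>J. w j * s j b)"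
    by (simp add: distrib_left sum.distrib)
next
  fix a
  assume "a \<notin> interval_EA K u"
  then show "(\<Sum>j\<in>J. w j * s j a) = 0"
    using s by (simp add: is_state_def)
qed

lemma affine_on_fun_evaluation_sum:
  "affine_on_fun S (\<lambda>a w. \<Sum>j\<in>J. c j * a (e j) * g j w)"
  unfolding affine_on_fun_def
  by (auto intro!: ext simp: sum_distrib_left sum_distrib_right mult_ac sum.swap[of _ J])

lemma affine_on_fun_instr_sum:
  assumes "\<And>x. x \<in> \<Omega> \<Longrightarrow> affine_on_fun S (I x)"
  shows "affine_on_fun S (instr_sum \<Omega> I)"
  using assms unfolding affine_on_fun_def instr_sum_def
  by (auto intro!: ext simp: sum_distrib_left sum.swap[of _ \<Omega>] cong: sum.cong)

lemma scaled_state_in_substates: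
  "0 \<le> l \<Longrightarrow> l \<le> 1 \<Longrightarrow> is_state K u s \<Longrightarrow> (\<lambda>v. l * s v) \<in> substates K u"
  unfolding substates_def states_def by blast

lemma states_subset_substates: "states K u \<subseteq> substates K u"
  using scaled_state_in_substates[of 1] by (auto simp: states_def)

lemma weighted_states_in_substates:
  assumes fin: "finite J" and "J \<noteq> {}" and c: "\<And>j. j \<in> J \<Longrightarrow> 0 \<le> c j" and c_sum: "sum c J \<le> 1"
    and s: "\<And>j. j \<in> J \<Longrightarrow> is_state K u (s j)"
  shows "(\<lambda>v. \<Sum>j\<in>J. c j * s j v) \<in> substates K u"
proof (cases "sum c J = 0")
  case True
  obtain j where "j \<in> J"
    using \<open>J \<noteq> {}\<close> by blast
  have "(\<lambda>v. \<Sum>j\<in>J. c j * s j v) = (\<lambda>v. 0 * s j v)"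
    using True c fin by (simp add: sum_nonneg_eq_0_iff)
  then show ?thesis
    using scaled_state_in_substates[of 0, OF _ _ s[OF \<open>j \<in> J\<close>]] by simp
next
  case False
  define l where "l = sum c J"
  have "l > 0"
    using False c unfolding l_def by (simp add: less_le sum_nonneg)
  have "is_state K u (\<lambda>v. \<Sum>j\<in>J. c j / l * s j v)"
    using c s \<open>l > 0\<close> by (intro is_state_convex_combination fin)
      (auto simp: l_def sum_divide_distrib[symmetric])
  moreover have "(\<lambda>v. \<Sum>j\<in>J. c j * s j v) = (\<lambda>v. l * (\<Sum>j\<in>J. c j / l * s j v))"
    using \<open>l > 0\<close> by (simp add: sum_distrib_left)
  ultimately show ?thesis
    using scaled_state_in_substates[of l] \<open>l > 0\<close> c_sum unfolding l_def by simp
qed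

definition mixed_holevo ::
  "'i set \<Rightarrow> ('i \<Rightarrow> real) \<Rightarrow> ('i \<Rightarrow> 'x \<Rightarrow> 'v) \<Rightarrow> ('i \<Rightarrow> 'x \<Rightarrow> 'w \<Rightarrow> real) \<Rightarrow>
    'x \<Rightarrow> ('v \<Rightarrow> real) \<Rightarrow> 'w \<Rightarrow> real" where
  "mixed_holevo N lam A bet x a = (\<lambda>w. \<Sum>i\<in>N. lam i * a (A i x) * bet i x w)"

lemma instr_sum_mixed_holevo:
  "instr_sum \<Omega> (mixed_holevo N lam A bet) a = (\<lambda>w. \<Sum>i\<in>N. lam i * (\<Sum>x\<in>\<Omega>. a (A i x) * bet i x w))"
  unfolding instr_sum_def mixed_holevo_def
  by (simp add: sum_distrib_left mult.assoc sum.swap[of _ \<Omega>])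

locale mixed_holevo_data =
  fixes K1 :: "'v::real_vector set" and u1 :: 'v and K2 :: "'w::real_vector set" and u2 :: 'w
    and \<Omega> :: "'x set" and N :: "'i set" and lam :: "'i \<Rightarrow> real"
    and A :: "'i \<Rightarrow> 'x \<Rightarrow> 'v" and bet :: "'i \<Rightarrow> 'x \<Rightarrow> 'w \<Rightarrow> real"
  assumes cone: "positive_cone K1" and finite_index: "finite N"
    and observables: "\<And>i. i \<in> N \<Longrightarrow> observable K1 u1 \<Omega> (A i)"
    and prepared_states: "\<And>i x. i \<in> N \<Longrightarrow> x \<in> \<Omega> \<Longrightarrow> is_state K2 u2 (bet i x)"
    and weight_nonneg: "\<And>i. i \<in> N \<Longrightarrow> 0 \<le> lam i"
    and weight_sum: "sum lam N = 1"
begin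

lemma index_nonempty: "N \<noteq> {}"
  using weight_sum by auto

lemma finite_outcomes: "finite \<Omega>"
  using index_nonempty observables by (auto simp: observable_def)

lemma observable_effect: "i \<in> N \<Longrightarrow> x \<in> \<Omega> \<Longrightarrow> A i x \<in> interval_EA K1 u1"
  using observables by (simp add: observable_def)

lemma measure_and_prepare_is_state:
  assumes "is_state K1 u1 a" "i \<in> N"
  shows "is_state K2 u2 (\<lambda>w. \<Sum>x\<in>\<Omega>. a (A i x) * bet i x w)"
  by (rule is_state_convex_combination[OF finite_outcomes])
    (use assms state_nonneg state_observable_sum[OF cone assms(1) observables] prepared_states in auto)

lemma instr_sum_is_state:
  assumes "is_state K1 u1 a"
  shows "is_state K2 u2 (instr_sum \<Omega> (mixed_holevo N lam A bet) a)"
  unfolding instr_sum_mixed_holevo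
  by (rule is_state_convex_combination[OF finite_index])
    (use measure_and_prepare_is_state[OF assms] weight_nonneg weight_sum in auto)

lemma mixed_holevo_operation:
  assumes x: "x \<in> \<Omega>"
  shows "operation K1 u1 K2 u2 (mixed_holevo N lam A bet x)"
  unfolding operation_def
proof (intro conjI ballI)
  have "mixed_holevo N lam A bet x = (\<lambda>a w. \<Sum>i\<in>N. lam i * a (A i x) * bet i x w)"
    by (simp add: mixed_holevo_def fun_eq_iff)
  then show "affine_on_fun (states K1 u1) (mixed_holevo N lam A bet x)"
    by (simp only: affine_on_fun_evaluation_sum)
next
  fix a
  assume "a \<in> states K1 u1"
  then have a: "is_state K1 u1 a"
    by (simp add: states_def)
  have "(\<Sum>i\<in>N. lam i * a (A i x)) \<le> sum lam N"
    using weight_nonneg state_le_1[OF a] by (intro sum_mono mult_left_le) auto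
  then show "mixed_holevo N lam A bet x a \<in> substates K2 u2"
    unfolding mixed_holevo_def
    using weight_nonneg state_nonneg[OF a] prepared_states x weight_sum
    by (intro weighted_states_in_substates[where c = "\<lambda>i. lam i * a (A i x)"]
        finite_index index_nonempty) auto
qed

lemma mixed_holevo_instrument: "instrument K1 u1 K2 u2 \<Omega> (mixed_holevo N lam A bet)"
proof -
  have "instr_sum \<Omega> (mixed_holevo N lam A bet) a \<in> states K2 u2" if "a \<in> states K1 u1" for a
    using instr_sum_is_state that by (simp add: states_def)
  moreover have "affine_on_fun (states K1 u1) (instr_sum \<Omega> (mixed_holevo N lam A bet))"
    using mixed_holevo_operation by (intro affine_on_fun_instr_sum) (simp add: operation_def)
  ultimately show ?thesis
    using mixed_holevo_operation finite_outcomes states_subset_substates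
    unfolding instrument_def channel_def operation_def by blast
qed

lemma mixed_effect_in_interval_EA:
  "x \<in> \<Omega> \<Longrightarrow> (\<Sum>i\<in>N. lam i *\<^sub>R A i x) \<in> interval_EA K1 u1"
  using observable_effect weight_nonneg weight_sum by (intro interval_EA_convex_combination cone) auto

lemma state_mixed_effect:
  assumes x: "x \<in> \<Omega>" and a: "is_state K1 u1 a"
  shows "a (\<Sum>i\<in>N. lam i *\<^sub>R A i x) = mixed_holevo N lam A bet x a u2"
proof -
  have "a (\<Sum>i\<in>N. lam i *\<^sub>R A i x) = (\<Sum>i\<in>N. lam i * a (A i x))"
    using observable_effect x weight_nonneg weight_sum
    by (intro state_convex_combination[OF cone a finite_index]) auto
  also have "\<dots> = mixed_holevo N lam A bet x a u2"
    using prepared_states x by (simp add: mixed_holevo_def is_state_def)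
  finally show ?thesis .
qed

end

theorem theorem4p1:
  fixes K1 :: "'v::real_vector set" and u1 :: 'v
    and K2 :: "'w::real_vector set" and u2 :: 'w
    and \<Omega> :: "'x set" and n :: nat
    and A :: "nat \<Rightarrow> 'x \<Rightarrow> 'v"
    and bet :: "nat \<Rightarrow> 'x \<Rightarrow> ('w \<Rightarrow> real)"
    and lam :: "nat \<Rightarrow> real"
    and I :: "'x \<Rightarrow> ('v \<Rightarrow> real) \<Rightarrow> ('w \<Rightarrow> real)"
  assumes E1: "interval_EA_setting K1 u1" and OD1: "order_determining K1 u1"
    and E2: "interval_EA_setting K2 u2" and OD2: "order_determining K2 u2"
    and fin: "finite \<Omega>" and n: "n \<ge> 1"
    and obs: "\<forall>i\<in>{1..n}. observable K1 u1 \<Omega> (A i)"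
    and beta: "\<forall>i\<in>{1..n}. \<forall>x\<in>\<Omega>. bet i x \<in> states K2 u2"
    and lam: "\<forall>i\<in>{1..n}. 0 \<le> lam i \<and> lam i \<le> 1"
    and lamsum: "(\<Sum>i=1..n. lam i) = 1"
    and I_def: "\<forall>x a. I x a = (\<lambda>w. \<Sum>i=1..n. lam i * a (A i x) * bet i x w)"
  shows "instrument K1 u1 K2 u2 \<Omega> I
    \<and> (\<forall>a\<in>states K1 u1.
         (\<forall>i\<in>{1..n}. (\<lambda>w. \<Sum>x\<in>\<Omega>. a (A i x) * bet i x w) \<in> states K2 u2)
       \<and> instr_sum \<Omega> I a = (\<lambda>w. \<Sum>i=1..n. lam i * (\<Sum>x\<in>\<Omega>. a (A i x) * bet i x w))
       \<and> instr_sum \<Omega> I a \<in> states K2 u2)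
    \<and> (\<forall>x\<in>\<Omega>. (\<Sum>i=1..n. lam i *\<^sub>R A i x) \<in> interval_EA K1 u1
       \<and> (\<forall>a\<in>states K1 u1. a (\<Sum>i=1..n. lam i *\<^sub>R A i x) = I x a u2))"
proof -
  \<comment> \<open>Order-determination only makes the effect representing \<open>\<I>\<^sub>x\<close> unique.\<close>
  interpret mixed_holevo_data K1 u1 K2 u2 \<Omega> "{1..n}" lam A bet
    using E1 obs beta lam lamsum
    by unfold_locales (auto simp: interval_EA_setting_def states_def)
  have "I = mixed_holevo {1..n} lam A bet"
    using I_def by (simp add: fun_eq_iff mixed_holevo_def)
  then show ?thesis
    using mixed_holevo_instrument measure_and_prepare_is_state instr_sum_is_state
      mixed_effect_in_interval_EA state_mixed_effect
    by (simp add: states_def instr_sum_mixed_holevo)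
qed

end
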